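(* Let $(X,d)$ be a complete Busemann convex geodesic metric space which is uniformly convex with a modulus of uniform convexity that is monotone or lower semicontinuous from the right. Let $(A,B)$ be a closed convex pair of subsets of $X$ with $B$ bounded, and let $T:A\cup B\to A\cup B$ be a cyclic relatively nonexpansive mapping. Then there exists $(x,y)\in A\times B$ such that $d(x,Tx)=d(y,Ty)=\operatorname{dist}(A,B)$.
   Context: $\operatorname{dist}(A,B)=\inf\{d(x,y):x\in A,y\in B\}$. A geodesic space is one in which any two points are joined by a geodesic segment; a subset is convex if it contains every geodesic segment joining two of its points. $X$ is Busemann convex if for any geodesics $c_1:[0,l_1]\to X$, $c_2:[0,l_2]\to X$, $d(c_1(tl_1),c_2(tl_2))\le (1-t)d(c_1(0),c_2(0))+t\,d(c_1(l_1),c_2(l_2))$ for all $t\in[0,1]$. $X$ is uniformly convex if for every $r>0$ and $\varepsilon\in(0,2]$ there is $\delta\in(0,1]$ such that for all $a,x,y$ with $d(x,a)\le r$, $d(y,a)\le r$, $d(x,y)\ge\varepsilon r$, every midpoint $m$ of $x,y$ satisfies $d(m,a)\le(1-\delta)r$; a function $\delta(r,\varepsilon)$ providing such $\delta$ is a modulus of uniform convexity; it is monotone if it is decreasing in $r$ for each fixed $\varepsilon$, and lower semicontinuous from the right if it is lower semicontinuous from the right in $r$ for each fixed $\varepsilon$. $T$ is relatively nonexpansive if $d(Tx,Ty)\le d(x,y)$ for all $x\in A$, $y\in B$, and cyclic if $T(A)\subseteq B$, $T(B)\subseteq A$. *)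

theory Defs
  imports "HOL-Analysis.Analysis"
begin

definition geodesic :: "(real \<Rightarrow> 'a::metric_space) \<Rightarrow> real \<Rightarrow> bool" where
  "geodesic c l \<longleftrightarrow> 0 \<le> l \<and> (\<forall>s\<in>{0..l}. \<forall>t\<in>{0..l}. dist (c s) (c t) = \<bar>s - t\<bar>)"

definition geodesic_joining :: "(real \<Rightarrow> 'a::metric_space) \<Rightarrow> real \<Rightarrow> 'a \<Rightarrow> 'a \<Rightarrow> bool" where
  "geodesic_joining c l x y \<longleftrightarrow> geodesic c l \<and> c 0 = x \<and> c l = y"

definition geodesic_space :: "'a::metric_space itself \<Rightarrow> bool" where
  "geodesic_space _ \<longleftrightarrow> (\<forall>x y::'a. \<exists>c l. geodesic_joining c l x y)"

definition geod_convex :: "'a::metric_space set \<Rightarrow> bool" where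
  "geod_convex S \<longleftrightarrow> (\<forall>x\<in>S. \<forall>y\<in>S. \<forall>c l. geodesic_joining c l x y \<longrightarrow> c ` {0..l} \<subseteq> S)"

definition busemann_convex :: "'a::metric_space itself \<Rightarrow> bool" where
  "busemann_convex _ \<longleftrightarrow> (\<forall>(c1::real \<Rightarrow> 'a) l1 c2 l2. geodesic c1 l1 \<longrightarrow> geodesic c2 l2 \<longrightarrow>
     (\<forall>t\<in>{0..1}. dist (c1 (t * l1)) (c2 (t * l2))
        \<le> (1 - t) * dist (c1 0) (c2 0) + t * dist (c1 l1) (c2 l2)))"

definition is_midpoint :: "'a::metric_space \<Rightarrow> 'a \<Rightarrow> 'a \<Rightarrow> bool" where
  "is_midpoint m x y \<longleftrightarrow> dist x m = dist x y / 2 \<and> dist y m = dist x y / 2"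

definition modulus_uc :: "'a::metric_space itself \<Rightarrow> (real \<Rightarrow> real \<Rightarrow> real) \<Rightarrow> bool" where
  "modulus_uc _ \<delta> \<longleftrightarrow> (\<forall>r>0. \<forall>\<epsilon>. 0 < \<epsilon> \<and> \<epsilon> \<le> 2 \<longrightarrow>
      0 < \<delta> r \<epsilon> \<and> \<delta> r \<epsilon> \<le> 1 \<and>
      (\<forall>a x y m::'a. dist x a \<le> r \<longrightarrow> dist y a \<le> r \<longrightarrow> dist x y \<ge> \<epsilon> * r \<longrightarrow>
          is_midpoint m x y \<longrightarrow> dist m a \<le> (1 - \<delta> r \<epsilon>) * r))"

definition uniformly_convex :: "'a::metric_space itself \<Rightarrow> bool" where
  "uniformly_convex X \<longleftrightarrow> (\<exists>\<delta>. modulus_uc X \<delta>)"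

definition monotone_modulus :: "(real \<Rightarrow> real \<Rightarrow> real) \<Rightarrow> bool" where
  "monotone_modulus \<delta> \<longleftrightarrow> (\<forall>\<epsilon>. 0 < \<epsilon> \<and> \<epsilon> \<le> 2 \<longrightarrow>
      (\<forall>r s. 0 < r \<longrightarrow> r \<le> s \<longrightarrow> \<delta> s \<epsilon> \<le> \<delta> r \<epsilon>))"

definition lsc_right_modulus :: "(real \<Rightarrow> real \<Rightarrow> real) \<Rightarrow> bool" where
  "lsc_right_modulus \<delta> \<longleftrightarrow> (\<forall>\<epsilon>. 0 < \<epsilon> \<and> \<epsilon> \<le> 2 \<longrightarrow>
      (\<forall>r>0. \<forall>e>0. \<exists>h>0. \<forall>s. r < s \<and> s < r + h \<longrightarrow> \<delta> r \<epsilon> - e < \<delta> s \<epsilon>))"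

definition rel_nonexpansive :: "('a::metric_space \<Rightarrow> 'a) \<Rightarrow> 'a set \<Rightarrow> 'a set \<Rightarrow> bool" where
  "rel_nonexpansive T A B \<longleftrightarrow> (\<forall>x\<in>A. \<forall>y\<in>B. dist (T x) (T y) \<le> dist x y)"

definition cyclic_map :: "('a \<Rightarrow> 'a) \<Rightarrow> 'a set \<Rightarrow> 'a set \<Rightarrow> bool" where
  "cyclic_map T A B \<longleftrightarrow> T ` A \<subseteq> B \<and> T ` B \<subseteq> A"

end

theory Submission
  imports Defs
begin

text \<open>By Zorn's lemma there is a minimal pair \<open>(K1, K2)\<close> of nonempty bounded closed convex sets
  \<open>K1 \<subseteq> A\<close>, \<open>K2 \<subseteq> B\<close> that is \<open>T\<close>-invariant and proximal, i.e. every point of one set lies at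
  distance \<open>dist(A,B)\<close> from some point of the other. Chains of such pairs have lower bounds because
  uniform convexity makes nearest points unique and yields Cantor's intersection theorem for
  chains of bounded closed convex sets. In a minimal pair all distances between \<open>K1\<close> and \<open>K2\<close>
  equal \<open>dist(A,B)\<close>: otherwise Busemann convexity and uniform convexity produce a proximal pair
  of midpoints strictly inside the diameter of the pair, and restricting the pair to intersections
  of balls contradicts minimality. Hence \<open>d(x, Tx) = d(Tx, T\<^sup>2x) = dist(A,B)\<close> for any \<open>x \<in> K1\<close>.\<close>

definition proximal_part :: "'a::metric_space set \<Rightarrow> 'a set \<Rightarrow> real \<Rightarrow> 'a set" where
  "proximal_part S Q D = {x\<in>S. \<exists>y\<in>Q. dist x y = D}"

lemma mem_proximal_part: "x \<in> proximal_part S Q D \<longleftrightarrow> x \<in> S \<and> (\<exists>y\<in>Q. dist x y = D)"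
  by (simp add: proximal_part_def)

lemma bounded_proximal_part:
  assumes "bounded Q"
  shows "bounded (proximal_part S Q D)"
proof -
  obtain p M where M: "\<forall>y\<in>Q. dist p y \<le> M" using assms unfolding bounded_def by blast
  have "dist p x \<le> M + D" if x: "x \<in> proximal_part S Q D" for x
  proof -
    obtain y where "y \<in> Q" "dist x y = D" using x unfolding proximal_part_def by blast
    then show ?thesis using M dist_triangle[of p x y] by (auto simp: dist_commute)
  qed
  then show ?thesis unfolding bounded_def by blast
qed

lemma infdist_approx:
  assumes "S \<noteq> {}" "0 < e"
  obtains a where "a \<in> S" "dist x a < infdist x S + e"
proof -
  have "(INF a\<in>S. dist x a) < infdist x S + e" using assms by (simp add: infdist_notempty)
  with assms that show ?thesis by (subst (asm) cINF_less_iff) auto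
qed

lemma closure_image_sequentially:
  fixes f :: "'a \<Rightarrow> 'b::first_countable_topology"
  assumes "l \<in> closure (f ` S)"
  obtains s where "\<And>n. s n \<in> S" "(\<lambda>n. f (s n)) \<longlonglongrightarrow> l"
proof -
  obtain x where x: "\<And>n. x n \<in> f ` S" "x \<longlonglongrightarrow> l" using assms unfolding closure_sequential by blast
  have "\<forall>n. \<exists>y. y \<in> S \<and> x n = f y" using x(1) by blast
  then obtain s where s: "\<And>n. s n \<in> S" "\<And>n. x n = f (s n)" by metis
  then have "x = (\<lambda>n. f (s n))" by auto
  then show ?thesis using that s(1) x(2) by blast
qed

lemma geodesic_joining_midpoint:
  assumes "geodesic_joining c l x y"
  shows "is_midpoint (c (l/2)) x y"
proof -
  have l: "0 \<le> l" and iso: "\<forall>s\<in>{0..l}. \<forall>t\<in>{0..l}. dist (c s) (c t) = \<bar>s - t\<bar>"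
    and ends: "c 0 = x" "c l = y"
    using assms unfolding geodesic_joining_def geodesic_def by auto
  have "dist x y = l" "dist x (c (l/2)) = l/2" "dist y (c (l/2)) = l/2"
    using iso l by (auto simp flip: ends)
  then show ?thesis unfolding is_midpoint_def by simp
qed

lemma geod_convexD:
  "geod_convex S \<Longrightarrow> x \<in> S \<Longrightarrow> y \<in> S \<Longrightarrow> geodesic_joining c l x y \<Longrightarrow> s \<in> {0..l} \<Longrightarrow> c s \<in> S"
  unfolding geod_convex_def by blast

lemma geod_convex_singleton: "geod_convex {p}"
  unfolding geod_convex_def
proof (intro ballI allI impI)
  fix x y c l assume "x \<in> {p}" "y \<in> {p}" "geodesic_joining c l x y"
  then have l: "0 \<le> l" and iso: "\<forall>s\<in>{0..l}. \<forall>t\<in>{0..l}. dist (c s) (c t) = \<bar>s - t\<bar>"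
    and ends: "c 0 = p" "c l = p"
    unfolding geodesic_joining_def geodesic_def by auto
  have "dist (c 0) (c l) = l" using iso l by auto
  then have "l = 0" using ends by simp
  then show "c ` {0..l} \<subseteq> {p}" using ends by simp
qed

lemma geod_convex_Int: "geod_convex S \<Longrightarrow> geod_convex Q \<Longrightarrow> geod_convex (S \<inter> Q)"
  unfolding geod_convex_def by blast

lemma geod_convex_Inter: "(\<And>S. S \<in> \<F> \<Longrightarrow> geod_convex S) \<Longrightarrow> geod_convex (\<Inter>\<F>)"
  unfolding geod_convex_def by blast

locale busemann_space =
  fixes tX :: "'a::metric_space itself"
  assumes geodesic: "geodesic_space tX" and busemann: "busemann_convex tX"
begin

lemma geodesic_joining_exists: "\<exists>c l. geodesic_joining c l (x::'a) y"
  using geodesic unfolding geodesic_space_def by blast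

lemma geod_convex_midpoint:
  assumes "geod_convex S" "x \<in> S" "y \<in> S"
  obtains m where "m \<in> S" "is_midpoint m (x::'a) y"
proof -
  obtain c l where g: "geodesic_joining c l x y" using geodesic_joining_exists by blast
  have "0 \<le> l" using g unfolding geodesic_joining_def geodesic_def by auto
  then show ?thesis
    using that geod_convexD[OF assms g, of "l/2"] geodesic_joining_midpoint[OF g] by auto
qed

lemma busemann_joining:
  assumes "geodesic_joining c1 l1 (x1::'a) y1" "geodesic_joining c2 l2 x2 y2" "t \<in> {0..1}"
  shows "dist (c1 (t * l1)) (c2 (t * l2)) \<le> (1 - t) * dist x1 x2 + t * dist y1 y2"
  using busemann assms unfolding busemann_convex_def geodesic_joining_def by auto

lemma busemann_max_dist:
  assumes "geodesic_joining c1 l1 (x1::'a) y1" "geodesic_joining c2 l2 x2 y2" "s \<in> {0..l1}"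
  obtains s' where "s' \<in> {0..l2}" "dist (c1 s) (c2 s') \<le> max (dist x1 x2) (dist y1 y2)"
proof -
  have l2: "0 \<le> l2" using assms(2) unfolding geodesic_joining_def geodesic_def by auto
  define t where "t = (if l1 = 0 then 0 else s / l1)"
  have t: "t \<in> {0..1}" and s: "s = t * l1" using assms(3) by (auto simp: t_def field_simps)
  have "dist (c1 s) (c2 (t * l2)) \<le> (1 - t) * dist x1 x2 + t * dist y1 y2"
    using busemann_joining[OF assms(1,2) t] s by simp
  also have "\<dots> \<le> (1 - t) * max (dist x1 x2) (dist y1 y2) + t * max (dist x1 x2) (dist y1 y2)"
    using t by (intro add_mono mult_left_mono) auto
  also have "\<dots> = max (dist x1 x2) (dist y1 y2)" by (simp add: algebra_simps)
  finally show ?thesis using t l2 by (intro that[of "t * l2"]) (auto simp: mult_left_le_one_le)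
qed

lemma geod_convex_infdist_le:
  assumes "S \<noteq> {}" "geod_convex S"
  shows "geod_convex {x::'a. infdist x S \<le> r}"
  unfolding geod_convex_def
proof (intro ballI allI impI subsetI)
  fix b1 b2 c l z
  assume b: "b1 \<in> {x. infdist x S \<le> r}" "b2 \<in> {x. infdist x S \<le> r}"
    and g: "geodesic_joining c l b1 b2" and "z \<in> c ` {0..l}"
  then obtain s where s: "s \<in> {0..l}" "z = c s" by blast
  have "infdist z S \<le> r + e" if e: "0 < e" for e
  proof -
    obtain a1 a2 where a: "a1 \<in> S" "dist b1 a1 < infdist b1 S + e" "a2 \<in> S" "dist b2 a2 < infdist b2 S + e"
      using infdist_approx[OF assms(1) e] by metis
    obtain c' l' where g': "geodesic_joining c' l' a1 a2" using geodesic_joining_exists by blast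
    obtain s' where s': "s' \<in> {0..l'}" "dist (c s) (c' s') \<le> max (dist b1 a1) (dist b2 a2)"
      using busemann_max_dist[OF g g' s(1)] by blast
    have "infdist z S \<le> dist z (c' s')" by (rule infdist_le[OF geod_convexD[OF assms(2) a(1,3) g' s'(1)]])
    also have "\<dots> \<le> r + e" using s' s(2) a b by auto
    finally show ?thesis .
  qed
  then show "z \<in> {x. infdist x S \<le> r}" by (simp add: field_le_epsilon)
qed

lemma geod_convex_cball: "geod_convex (cball (p::'a) r)"
proof -
  have "cball p r = {x. infdist x {p} \<le> r}" by (auto simp: dist_commute)
  then show ?thesis using geod_convex_infdist_le[OF _ geod_convex_singleton, of p r] by simp
qed

end

locale uc_busemann_space = busemann_space tX for tX :: "'a::complete_space itself" +
  fixes \<delta> :: "real \<Rightarrow> real \<Rightarrow> real"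
  assumes modulus: "modulus_uc tX \<delta>"
    and regular: "monotone_modulus \<delta> \<or> lsc_right_modulus \<delta>"
begin

lemma modulus_ucD:
  assumes "0 < r" "0 < \<epsilon>" "\<epsilon> \<le> 2"
  shows "0 < \<delta> r \<epsilon>"
    and "dist x a \<le> r \<Longrightarrow> dist y a \<le> r \<Longrightarrow> \<epsilon> * r \<le> dist x y \<Longrightarrow> is_midpoint m x y
      \<Longrightarrow> dist m (a::'a) \<le> (1 - \<delta> r \<epsilon>) * r"
  using modulus assms unfolding modulus_uc_def by auto

text \<open>This is the only place where the regularity of the modulus is used: it turns the
  pointwise positivity of \<open>\<delta> r \<epsilon>\<close> into a bound that is uniform on a right neighbourhood of \<open>r\<close>.\<close>
lemma modulus_lower_bound:
  assumes "0 < r" "0 < \<epsilon>" "\<epsilon> \<le> 2"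
  obtains c \<eta> where "0 < c" "0 < \<eta>" "\<eta> \<le> 1" "\<And>s. r \<le> s \<Longrightarrow> s \<le> r + \<eta> \<Longrightarrow> c \<le> \<delta> s \<epsilon>"
  using regular
proof
  assume "monotone_modulus \<delta>"
  moreover have "0 < \<delta> (r + 1) \<epsilon>" using modulus_ucD(1) assms by simp
  ultimately show ?thesis
    using that[of "\<delta> (r + 1) \<epsilon>" 1] assms unfolding monotone_modulus_def by auto
next
  assume lsc: "lsc_right_modulus \<delta>"
  have pos: "0 < \<delta> r \<epsilon>" using modulus_ucD(1)[OF assms] .
  then obtain h where "0 < h" and h: "\<And>s. r < s \<Longrightarrow> s < r + h \<Longrightarrow> \<delta> r \<epsilon> / 2 < \<delta> s \<epsilon>"
    using lsc assms unfolding lsc_right_modulus_def by (metis field_sum_of_halves half_gt_zero_iff add_diff_cancel)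
  have "\<delta> r \<epsilon> / 2 \<le> \<delta> s \<epsilon>" if "r \<le> s" "s \<le> r + min (h/2) 1" for s
  proof (cases "s = r")
    case False
    moreover have "min (h/2) 1 < h" using \<open>0 < h\<close> by linarith
    ultimately show ?thesis using that h[of s] by linarith
  qed (use pos in simp)
  then show ?thesis using that[of "\<delta> r \<epsilon> / 2" "min (h/2) 1"] pos \<open>0 < h\<close> by auto
qed

lemma midpoint_drop:
  assumes "0 < r" "0 < \<epsilon>"
  obtains c \<eta> where "0 < c" "0 < \<eta>"
    "\<And>a x y m s. s \<le> r + \<eta> \<Longrightarrow> dist x a \<le> s \<Longrightarrow> dist y a \<le> s \<Longrightarrow> \<epsilon> \<le> dist x y
      \<Longrightarrow> is_midpoint m x y \<Longrightarrow> dist m (a::'a) \<le> max s r - c"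
proof -
  define e where "e = min 2 (\<epsilon> / (r + 1))"
  have e: "0 < e" "e \<le> 2" using assms by (auto simp: e_def)
  obtain c \<eta> where c: "0 < c" "0 < \<eta>" "\<eta> \<le> 1" "\<And>s. r \<le> s \<Longrightarrow> s \<le> r + \<eta> \<Longrightarrow> c \<le> \<delta> s e"
    using modulus_lower_bound[OF assms(1) e] by blast
  have "dist m a \<le> max s r - c * r"
    if s: "s \<le> r + \<eta>" and a: "dist x a \<le> s" "dist y a \<le> s" "\<epsilon> \<le> dist x y" "is_midpoint m x y"
    for a x y m :: 'a and s
  proof -
    define s' where "s' = max s r"
    have s': "r \<le> s'" "s' \<le> r + \<eta>" "0 < s'" using s assms c(2) by (auto simp: s'_def)
    have "e * s' \<le> \<epsilon> / (r + 1) * (r + 1)"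
      using s' c(3) e assms by (intro mult_mono) (auto simp: e_def)
    also have "\<dots> = \<epsilon>" using assms by simp
    finally have "e * s' \<le> dist x y" using a(3) by simp
    moreover have "dist x a \<le> s'" "dist y a \<le> s'" using a by (auto simp: s'_def)
    ultimately have "dist m a \<le> (1 - \<delta> s' e) * s'"
      using modulus_ucD(2)[OF s'(3) e] a(4) by blast
    also have "\<dots> \<le> (1 - c) * s'" using c(4) s' by (intro mult_right_mono) auto
    also have "\<dots> \<le> s' - c * r" using s' c by (simp add: algebra_simps)
    finally show ?thesis by (simp add: s'_def)
  qed
  moreover have "0 < c * r" using c assms by simp
  ultimately show ?thesis using that c(2) by blast
qed

text \<open>Otherwise the midpoint of \<open>x\<close> and \<open>y\<close>, which lies in \<open>S\<close>, would be nearer to \<open>p\<close> than \<open>S\<close> is.\<close>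
lemma convex_almost_nearest_close:
  assumes "0 < r" "0 < \<epsilon>"
  shows "\<exists>\<rho>>0. \<forall>S x y p. geod_convex S \<longrightarrow> x \<in> S \<longrightarrow> y \<in> S \<longrightarrow> dist x p \<le> r + \<rho> \<longrightarrow>
    dist y p \<le> r + \<rho> \<longrightarrow> r - \<rho> < infdist p S \<longrightarrow> dist x (y::'a) < \<epsilon>"
proof -
  obtain c \<eta> where c: "0 < c" "0 < \<eta>"
    and drop: "\<And>a x y m s. s \<le> r + \<eta> \<Longrightarrow> dist x a \<le> s \<Longrightarrow> dist y a \<le> s \<Longrightarrow> \<epsilon> \<le> dist x y
      \<Longrightarrow> is_midpoint m x y \<Longrightarrow> dist m (a::'a) \<le> max s r - c"
    using midpoint_drop[OF assms] by blast
  define \<rho> where "\<rho> = min \<eta> (c/2)"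
  have "dist x y < \<epsilon>"
    if S: "geod_convex S" "x \<in> S" "y \<in> S" and near: "dist x p \<le> r + \<rho>" "dist y p \<le> r + \<rho>"
      and far: "r - \<rho> < infdist p S" for S and x y p :: 'a
  proof (rule ccontr)
    assume "\<not> dist x y < \<epsilon>"
    moreover obtain m where m: "m \<in> S" "is_midpoint m x y" using geod_convex_midpoint[OF S] .
    ultimately have "dist m p \<le> max (r + \<rho>) r - c"
      using drop[of "r + \<rho>"] near by (simp add: \<rho>_def)
    moreover have "infdist p S \<le> dist m p" using infdist_le[OF m(1), of p] by (simp add: dist_commute)
    ultimately show False using far c by (auto simp: \<rho>_def)
  qed
  moreover have "0 < \<rho>" using c by (simp add: \<rho>_def)
  ultimately show ?thesis by blast
qed

lemma nearest_point_exists: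
  assumes "K \<noteq> {}" "closed K" "geod_convex K"
  obtains q where "q \<in> K" "dist (p::'a) q = infdist p K"
proof (cases "infdist p K = 0")
  case True
  then show ?thesis using that in_closed_iff_infdist_zero[OF assms(2,1)] by force
next
  case False
  define r where "r = infdist p K"
  have r: "0 < r" using False infdist_nonneg[of p K] by (simp add: r_def)
  have "bdd_below (dist p ` K)" by (rule bdd_belowI[of _ 0]) auto
  then have "r \<in> closure (dist p ` K)"
    using closure_contains_Inf[of "dist p ` K"] assms(1) by (simp add: r_def infdist_notempty)
  then obtain z where z: "\<And>n. z n \<in> K" and lim: "(\<lambda>n. dist p (z n)) \<longlonglongrightarrow> r"
    using closure_image_sequentially by blast
  have "Cauchy z"
  proof (rule metric_CauchyI)
    fix \<epsilon> :: real assume "0 < \<epsilon>"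
    obtain \<rho> where "0 < \<rho>" and close: "\<forall>S x y (p::'a). geod_convex S \<longrightarrow> x \<in> S \<longrightarrow> y \<in> S \<longrightarrow>
        dist x p \<le> r + \<rho> \<longrightarrow> dist y p \<le> r + \<rho> \<longrightarrow> r - \<rho> < infdist p S \<longrightarrow> dist x y < \<epsilon>"
      using convex_almost_nearest_close[OF r \<open>0 < \<epsilon>\<close>] by blast
    obtain N where "\<forall>n\<ge>N. dist p (z n) < r + \<rho>"
      using order_tendstoD(2)[OF lim, of "r + \<rho>"] \<open>0 < \<rho>\<close> unfolding eventually_sequentially by auto
    then have near: "dist (z n) p \<le> r + \<rho>" if "N \<le> n" for n
      using that by (simp add: dist_commute less_imp_le)
    have far: "r - \<rho> < infdist p K" using \<open>0 < \<rho>\<close> by (simp add: r_def)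
    have "dist (z m) (z n) < \<epsilon>" if "N \<le> m" "N \<le> n" for m n
      using close[rule_format, OF assms(3) z(1) z(1) near near far] that .
    then show "\<exists>N. \<forall>m\<ge>N. \<forall>n\<ge>N. dist (z m) (z n) < \<epsilon>" by blast
  qed
  then obtain q where q: "z \<longlonglongrightarrow> q" using Cauchy_convergent_iff convergent_def by blast
  have "q \<in> K" using closed_sequentially[OF assms(2) z q] .
  moreover have "dist p q = r" using LIMSEQ_unique[OF tendsto_dist[OF tendsto_const q] lim] .
  ultimately show ?thesis using that by (simp add: r_def)
qed

lemma nearest_point_unique:
  assumes "geod_convex Q" "q \<in> Q" "q' \<in> Q" "dist a q = infdist a Q" "dist a q' = infdist (a::'a) Q"
  shows "q = q'"
proof (rule ccontr)
  assume "q \<noteq> q'"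
  define r where "r = infdist a Q"
  have "r \<noteq> 0"
  proof
    assume "r = 0"
    then have "dist a q = 0" "dist a q' = 0" using assms(4,5) by (simp_all add: r_def)
    then show False using \<open>q \<noteq> q'\<close> by simp
  qed
  then have r: "0 < r" using infdist_nonneg[of a Q] by (simp add: r_def)
  have e: "0 < dist q q'" using \<open>q \<noteq> q'\<close> by simp
  obtain \<rho> where "0 < \<rho>" and close: "\<forall>S x y (p::'a). geod_convex S \<longrightarrow> x \<in> S \<longrightarrow> y \<in> S \<longrightarrow>
      dist x p \<le> r + \<rho> \<longrightarrow> dist y p \<le> r + \<rho> \<longrightarrow> r - \<rho> < infdist p S \<longrightarrow> dist x y < dist q q'"
    using convex_almost_nearest_close[OF r e] by blast
  have "dist q a \<le> r + \<rho>" "dist q' a \<le> r + \<rho>" "r - \<rho> < infdist a Q"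
    using assms(4,5) \<open>0 < \<rho>\<close> by (simp_all add: r_def dist_commute)
  then have "dist q q' < dist q q'" by (rule close[rule_format, OF assms(1-3)])
  then show False by simp
qed


lemma chain_nearest_points_close:
  assumes chain: "\<And>K L. K \<in> \<F> \<Longrightarrow> L \<in> \<F> \<Longrightarrow> K \<subseteq> L \<or> L \<subseteq> K"
    and convex: "\<And>K. K \<in> \<F> \<Longrightarrow> geod_convex K"
    and q: "\<And>K. K \<in> \<F> \<Longrightarrow> q K \<in> K" "\<And>K. K \<in> \<F> \<Longrightarrow> dist (q K) p \<le> R"
    and "0 < R" "0 < \<epsilon>"
  shows "\<exists>\<rho>>0. \<forall>K\<in>\<F>. \<forall>L\<in>\<F>. R - \<rho> < infdist p K \<longrightarrow> R - \<rho> < infdist (p::'a) L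
    \<longrightarrow> dist (q K) (q L) < \<epsilon>"
proof -
  obtain \<rho> where "0 < \<rho>" and close: "\<forall>S x y (p::'a). geod_convex S \<longrightarrow> x \<in> S \<longrightarrow> y \<in> S \<longrightarrow>
      dist x p \<le> R + \<rho> \<longrightarrow> dist y p \<le> R + \<rho> \<longrightarrow> R - \<rho> < infdist p S \<longrightarrow> dist x y < \<epsilon>"
    using convex_almost_nearest_close[OF \<open>0 < R\<close> \<open>0 < \<epsilon>\<close>] by blast
  have nested: "dist (q K) (q L) < \<epsilon>"
    if "K \<in> \<F>" "L \<in> \<F>" "K \<subseteq> L" "R - \<rho> < infdist p L" for K L
  proof (rule close[rule_format, OF convex[OF \<open>L \<in> \<F>\<close>]])
    show "q K \<in> L" "q L \<in> L" using q(1) that by auto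
    show "dist (q K) p \<le> R + \<rho>" "dist (q L) p \<le> R + \<rho>" using q(2) that \<open>0 < \<rho>\<close> by force+
  qed fact
  have "dist (q K) (q L) < \<epsilon>"
    if "K \<in> \<F>" "L \<in> \<F>" "R - \<rho> < infdist p K" "R - \<rho> < infdist p L" for K L
    using chain[OF that(1,2)] nested[of K L] nested[of L K] that by (auto simp: dist_commute)
  then show ?thesis using \<open>0 < \<rho>\<close> by blast
qed

lemma chain_nearest_points_limit:
  assumes chain: "\<And>K L. K \<in> \<F> \<Longrightarrow> L \<in> \<F> \<Longrightarrow> K \<subseteq> L \<or> L \<subseteq> K"
    and sets: "\<And>K. K \<in> \<F> \<Longrightarrow> K \<noteq> {} \<and> closed K \<and> geod_convex K"
    and q: "\<And>K. K \<in> \<F> \<Longrightarrow> q K \<in> K \<and> dist (q K) p = infdist (p::'a) K"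
    and R: "0 < R" "\<And>K. K \<in> \<F> \<Longrightarrow> infdist p K \<le> R"
    and Ks: "\<And>n. Ks n \<in> \<F>" "(\<lambda>n. infdist p (Ks n)) \<longlonglongrightarrow> R"
  obtains x where "(\<lambda>n. q (Ks n)) \<longlonglongrightarrow> x" "x \<in> \<Inter>\<F>"
proof -
  have close: "\<exists>\<rho>>0. \<forall>K\<in>\<F>. \<forall>L\<in>\<F>. R - \<rho> < infdist p K \<longrightarrow> R - \<rho> < infdist p L
      \<longrightarrow> dist (q K) (q L) < \<epsilon>" if "0 < \<epsilon>" for \<epsilon>
    using chain_nearest_points_close[OF chain, where q = q and p = p and R = R and \<epsilon> = \<epsilon>] sets q R that
    by simp
  have near: "\<exists>N. \<forall>n\<ge>N. R - \<rho> < infdist p (Ks n)" if "0 < \<rho>" for \<rho>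
    using order_tendstoD(1)[OF Ks(2), of "R - \<rho>"] that unfolding eventually_sequentially by simp
  have "Cauchy (\<lambda>n. q (Ks n))"
  proof (rule metric_CauchyI)
    fix \<epsilon> :: real assume "0 < \<epsilon>"
    then obtain \<rho> where "0 < \<rho>" and \<rho>: "\<forall>K\<in>\<F>. \<forall>L\<in>\<F>. R - \<rho> < infdist p K
        \<longrightarrow> R - \<rho> < infdist p L \<longrightarrow> dist (q K) (q L) < \<epsilon>"
      using close by blast
    then show "\<exists>N. \<forall>m\<ge>N. \<forall>n\<ge>N. dist (q (Ks m)) (q (Ks n)) < \<epsilon>"
      using near[OF \<open>0 < \<rho>\<close>] Ks(1) by blast
  qed
  then obtain x where x: "(\<lambda>n. q (Ks n)) \<longlonglongrightarrow> x" using Cauchy_convergent_iff convergent_def by blast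
  have "x \<in> K" if K: "K \<in> \<F>" for K
  proof (cases "infdist p K < R")
    case True
    then obtain N where N: "\<forall>n\<ge>N. infdist p K < infdist p (Ks n)" using near[of "R - infdist p K"] by auto
    have "q (Ks n) \<in> K" if "N \<le> n" for n
    proof -
      have "\<not> K \<subseteq> Ks n" using infdist_mono[of K "Ks n" p] sets[OF K] N that by force
      then show ?thesis using chain[OF K Ks(1)] q[OF Ks(1)] by blast
    qed
    then have "\<forall>\<^sub>F n in sequentially. q (Ks n) \<in> K" unfolding eventually_sequentially by blast
    then show ?thesis using Lim_in_closed_set[OF _ _ _ x] sets[OF K] by simp
  next
    case False
    have "(\<lambda>n. q (Ks n)) \<longlonglongrightarrow> q K"
      unfolding lim_sequentially
    proof (intro allI impI)
      fix \<epsilon> :: real assume "0 < \<epsilon>"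
      then obtain \<rho> where "0 < \<rho>" and \<rho>: "\<forall>K\<in>\<F>. \<forall>L\<in>\<F>. R - \<rho> < infdist p K
          \<longrightarrow> R - \<rho> < infdist p L \<longrightarrow> dist (q K) (q L) < \<epsilon>"
        using close by blast
      moreover obtain N where "\<forall>n\<ge>N. R - \<rho> < infdist p (Ks n)" using near[OF \<open>0 < \<rho>\<close>] by blast
      ultimately have "\<forall>n\<ge>N. dist (q (Ks n)) (q K) < \<epsilon>" using Ks(1) K False by auto
      then show "\<exists>N. \<forall>n\<ge>N. dist (q (Ks n)) (q K) < \<epsilon>" by blast
    qed
    then show ?thesis using LIMSEQ_unique[OF x] q[OF K] by simp
  qed
  then show ?thesis using that x by blast
qed

text \<open>Cantor's intersection theorem for chains: the nearest points to a fixed \<open>p\<close> converge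
  along sets whose distance from \<open>p\<close> approaches the supremum of these distances.\<close>
lemma chain_Inter_nonempty:
  assumes "\<F> \<noteq> {}"
    and sets: "\<And>K. K \<in> \<F> \<Longrightarrow> K \<noteq> {} \<and> closed K \<and> geod_convex K \<and> bounded (K::'a set)"
    and chain: "\<And>K L. K \<in> \<F> \<Longrightarrow> L \<in> \<F> \<Longrightarrow> K \<subseteq> L \<or> L \<subseteq> K"
  shows "\<Inter>\<F> \<noteq> {}"
proof -
  obtain K0 p where K0: "K0 \<in> \<F>" "p \<in> K0" using assms(1) sets by blast
  obtain M where M: "\<forall>y\<in>K0. dist p y \<le> M" using sets[OF K0(1)] bounded_any_center by blast
  have "infdist p K \<le> M" if K: "K \<in> \<F>" for K
  proof -
    obtain z where "z \<in> K" "z \<in> K0" using chain[OF K K0(1)] sets[OF K] K0(2) by blast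
    then show ?thesis using M infdist_le[of z K p] by force
  qed
  then have bdd: "bdd_above ((\<lambda>K. infdist p K) ` \<F>)" by (meson bdd_above.I2)
  define R where "R = (SUP K\<in>\<F>. infdist p K)"
  have le_R: "infdist p K \<le> R" if "K \<in> \<F>" for K using cSUP_upper[OF that bdd] by (simp add: R_def)
  show ?thesis
  proof (cases "R = 0")
    case True
    then have "p \<in> K" if "K \<in> \<F>" for K
      using le_R[OF that] infdist_nonneg[of p K] in_closed_iff_infdist_zero[of K p] sets[OF that] by simp
    then show ?thesis by blast
  next
    case False
    then have "0 < R" using le_R[OF K0(1)] infdist_nonneg[of p K0] by simp
    have "\<exists>z. z \<in> K \<and> dist z p = infdist p K" if "K \<in> \<F>" for K
      using nearest_point_exists[of K p] sets[OF that] by (metis dist_commute)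
    then obtain q where q: "\<And>K. K \<in> \<F> \<Longrightarrow> q K \<in> K \<and> dist (q K) p = infdist p K" by metis
    have "R \<in> closure ((\<lambda>K. infdist p K) ` \<F>)"
      using closure_contains_Sup[OF _ bdd] assms(1) by (simp add: R_def)
    then obtain Ks where "\<And>n. Ks n \<in> \<F>" "(\<lambda>n. infdist p (Ks n)) \<longlonglongrightarrow> R"
      using closure_image_sequentially by blast
    then show ?thesis
      using chain_nearest_points_limit[OF chain _ q \<open>0 < R\<close> le_R] sets by blast
  qed
qed

lemma proximal_part_eq_infdist_le:
  assumes "Q \<noteq> {}" "closed Q" "geod_convex Q" "\<And>x y. x \<in> S \<Longrightarrow> y \<in> Q \<Longrightarrow> D \<le> dist x y"
  shows "proximal_part S Q D = S \<inter> {x::'a. infdist x Q \<le> D}"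
proof
  show "proximal_part S Q D \<subseteq> S \<inter> {x. infdist x Q \<le> D}"
    unfolding proximal_part_def using infdist_le by fastforce
  show "S \<inter> {x. infdist x Q \<le> D} \<subseteq> proximal_part S Q D"
  proof
    fix x assume x: "x \<in> S \<inter> {x. infdist x Q \<le> D}"
    obtain y where "y \<in> Q" "dist x y = infdist x Q" using nearest_point_exists[OF assms(1-3)] .
    then show "x \<in> proximal_part S Q D" using x assms(4)[of x y] unfolding proximal_part_def by force
  qed
qed

lemma closed_geod_convex_proximal_part:
  assumes "closed S" "geod_convex S" "Q \<noteq> {}" "closed Q" "geod_convex Q"
    and "\<And>x y. x \<in> S \<Longrightarrow> y \<in> Q \<Longrightarrow> D \<le> dist x (y::'a)"
  shows "closed (proximal_part S Q D)" "geod_convex (proximal_part S Q D)"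
proof -
  have "closed {x. infdist x Q \<le> D}"
    by (intro closed_Collect_le continuous_on_infdist continuous_on_id continuous_on_const)
  then show "closed (proximal_part S Q D)"
    using assms by (simp add: proximal_part_eq_infdist_le closed_Int)
  show "geod_convex (proximal_part S Q D)"
    using assms geod_convex_infdist_le[OF assms(3,5)]
    by (simp add: proximal_part_eq_infdist_le geod_convex_Int)
qed

lemma setdist_attained:
  assumes "A \<noteq> {}" "B \<noteq> {}" "closed A" "closed B" "geod_convex A" "geod_convex B" "bounded B"
  obtains a b where "a \<in> A" "b \<in> B" "dist a b = setdist A (B::'a set)"
proof -
  define K where "K t = B \<inter> {b. infdist b A \<le> t}" for t
  have "\<Inter>(K ` {setdist A B<..}) \<noteq> {}"
  proof (rule chain_Inter_nonempty)
    show "K ` {setdist A B<..} \<noteq> {}" by simp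
    fix X assume "X \<in> K ` {setdist A B<..}"
    then obtain t where t: "setdist A B < t" and X: "X = K t" by auto
    obtain a b where "a \<in> A" "b \<in> B" "dist a b < t" using setdist_ltE[OF t assms(1,2)] .
    then have "b \<in> X" using infdist_le[of a A b] by (force simp: X K_def dist_commute)
    moreover have "closed X"
      unfolding X K_def using assms(4)
      by (intro closed_Int closed_Collect_le continuous_on_infdist continuous_on_id continuous_on_const)
    moreover have "geod_convex X"
      unfolding X K_def using geod_convex_infdist_le[OF assms(1,5)] assms(6) by (simp add: geod_convex_Int)
    moreover have "bounded X" unfolding X K_def using assms(7) by (simp add: bounded_Int)
    ultimately show "X \<noteq> {} \<and> closed X \<and> geod_convex X \<and> bounded X" by blast
  next
    have "K s \<subseteq> K t" if "s \<le> t" for s t using that by (auto simp: K_def)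
    moreover fix X Y assume "X \<in> K ` {setdist A B<..}" "Y \<in> K ` {setdist A B<..}"
    ultimately show "X \<subseteq> Y \<or> Y \<subseteq> X" by (metis imageE linear)
  qed
  then obtain b where "b \<in> B" and "\<And>t. setdist A B < t \<Longrightarrow> infdist b A \<le> t" by (auto simp: K_def)
  then have b: "b \<in> B" "infdist b A \<le> setdist A B" by (auto intro: dense_ge)
  obtain a where "a \<in> A" "dist b a = infdist b A" using nearest_point_exists[OF assms(1,3,5)] .
  with b show ?thesis using that setdist_le_dist[of a A b B] by (force simp: dist_commute)
qed

end

locale cyclic_relatively_nonexpansive = uc_busemann_space tX \<delta> for tX :: "'a::complete_space itself" and \<delta> +
  fixes A B :: "'a set" and T :: "'a \<Rightarrow> 'a"
  assumes nonempty: "A \<noteq> {}" "B \<noteq> {}" and closed: "closed A" "closed B"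
    and convex: "geod_convex A" "geod_convex B" and bounded: "bounded B"
    and cyclic: "cyclic_map T A B" and nonexpansive: "rel_nonexpansive T A B"
begin

abbreviation D where "D \<equiv> setdist A B"

lemma T_A: "x \<in> A \<Longrightarrow> T x \<in> B" and T_B: "y \<in> B \<Longrightarrow> T y \<in> A"
  using cyclic unfolding cyclic_map_def by blast+

lemma dist_T_le: "x \<in> A \<Longrightarrow> y \<in> B \<Longrightarrow> dist (T x) (T y) \<le> dist x y"
  using nonexpansive unfolding rel_nonexpansive_def by blast

lemma dist_T_eq_D:
  assumes "x \<in> A" "y \<in> B" "dist x y = D"
  shows "dist (T x) (T y) = D"
  using dist_T_le[OF assms(1,2)] setdist_le_dist[OF T_B[OF assms(2)] T_A[OF assms(1)]] assms(3)
  by (simp add: dist_commute)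

lemma proximal_partner_unique:
  assumes "x \<in> A" "y \<in> B" "x' \<in> A" "y' \<in> B" "dist x y = D" "dist x' y' = D"
  shows "x = x' \<longleftrightarrow> y = y'"
proof -
  have "infdist a B = D" if "a \<in> A" "b \<in> B" "dist a b = D" for a b
    using infdist_le[OF that(2), of a] setdist_le_sing[OF that(1), of B] that(3)
    by (simp add: infdist_eq_setdist)
  moreover have "infdist b A = D" if "a \<in> A" "b \<in> B" "dist a b = D" for a b
    using infdist_le[OF that(1), of b] setdist_le_sing[OF that(2), of A] that(3)
    by (simp add: infdist_eq_setdist setdist_sym dist_commute)
  ultimately show ?thesis
    using nearest_point_unique[OF convex(1) assms(1,3), of y] nearest_point_unique[OF convex(2) assms(2,4), of x]
      assms by (auto simp: dist_commute)
qed

definition invariant_proximal_pair :: "'a set \<Rightarrow> 'a set \<Rightarrow> bool" where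
  "invariant_proximal_pair E H \<longleftrightarrow> E \<subseteq> A \<and> H \<subseteq> B \<and> E \<noteq> {} \<and> H \<noteq> {} \<and> closed E \<and> closed H \<and>
    geod_convex E \<and> geod_convex H \<and> bounded E \<and> bounded H \<and> T ` E \<subseteq> H \<and> T ` H \<subseteq> E \<and>
    E \<subseteq> proximal_part E H D \<and> H \<subseteq> proximal_part H E D"

definition minimal_invariant_pair :: "'a set \<Rightarrow> 'a set \<Rightarrow> bool" where
  "minimal_invariant_pair K1 K2 \<longleftrightarrow> invariant_proximal_pair K1 K2 \<and>
    (\<forall>E H. invariant_proximal_pair E H \<longrightarrow> E \<subseteq> K1 \<longrightarrow> H \<subseteq> K2 \<longrightarrow> E = K1 \<and> H = K2)"

lemma invariant_proximal_pair_proximal_parts: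
  assumes "E \<subseteq> A" "H \<subseteq> B" "closed E" "closed H" "geod_convex E" "geod_convex H" "bounded H"
    and "\<exists>x\<in>E. \<exists>y\<in>H. dist x y = D"
    and invariant: "\<And>x y. x \<in> E \<Longrightarrow> y \<in> H \<Longrightarrow> dist x y = D \<Longrightarrow> T x \<in> H \<and> T y \<in> E"
  shows "invariant_proximal_pair (proximal_part E H D) (proximal_part H E D)"
proof -
  let ?E = "proximal_part E H D" and ?H = "proximal_part H E D"
  have pair: "x \<in> ?E \<and> y \<in> ?H" if "x \<in> E" "y \<in> H" "dist x y = D" for x y
    using that by (auto simp: mem_proximal_part dist_commute)
  have E_partner: "\<exists>y\<in>H. dist x y = D" if "x \<in> ?E" for x
    using that by (simp add: mem_proximal_part)
  have H_partner: "\<exists>x\<in>E. dist x y = D" if "y \<in> ?H" for y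
    using that by (auto simp: mem_proximal_part dist_commute)
  have T_pair: "T x \<in> ?H \<and> T y \<in> ?E" if "x \<in> E" "y \<in> H" "dist x y = D" for x y
  proof -
    have "dist (T y) (T x) = D" using dist_T_eq_D[of x y] that assms(1,2) by (auto simp: dist_commute)
    then show ?thesis using pair[of "T y" "T x"] invariant[OF that] by blast
  qed
  have "E \<noteq> {}" "H \<noteq> {}" using assms(8) by blast+
  have bound: "D \<le> dist x y" "D \<le> dist y x" if "x \<in> E" "y \<in> H" for x y
    using setdist_le_dist[of x A y B] that assms(1,2) by (auto simp: dist_commute)
  note closed_convex = closed_geod_convex_proximal_part
  show ?thesis
    unfolding invariant_proximal_pair_def
  proof (intro conjI)
    show "?E \<subseteq> A" "?H \<subseteq> B" using assms(1,2) by (auto simp: mem_proximal_part)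
    show "?E \<noteq> {}" "?H \<noteq> {}" using assms(8) pair by blast+
    show "closed ?E" "geod_convex ?E"
      using closed_convex[OF assms(3,5) \<open>H \<noteq> {}\<close> assms(4,6)] bound(1) by blast+
    show "closed ?H" "geod_convex ?H"
      using closed_convex[OF assms(4,6) \<open>E \<noteq> {}\<close> assms(3,5)] bound(2) by blast+
    show "bounded ?E" using bounded_proximal_part[OF assms(7)] .
    show "bounded ?H" using assms(7) by (rule bounded_subset) (auto simp: mem_proximal_part)
    show "T ` ?E \<subseteq> ?H" using E_partner T_pair by (fastforce simp: mem_proximal_part)
    show "T ` ?H \<subseteq> ?E" using H_partner T_pair by (fastforce simp: mem_proximal_part)
    show "?E \<subseteq> proximal_part ?E ?H D" using E_partner pair by (fastforce simp: mem_proximal_part)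
    show "?H \<subseteq> proximal_part ?H ?E D"
      using H_partner pair by (fastforce simp: mem_proximal_part dist_commute)
  qed
qed

lemma invariant_proximal_pair_exists: "\<exists>E H. invariant_proximal_pair E H"
proof -
  obtain a b where "a \<in> A" "b \<in> B" "dist a b = D"
    using setdist_attained[OF nonempty closed convex bounded] .
  then show ?thesis
    using invariant_proximal_pair_proximal_parts[OF order_refl order_refl closed convex bounded] T_A T_B
    by blast
qed

lemma invariant_proximal_pairD:
  assumes "invariant_proximal_pair E H"
  shows "E \<subseteq> A" "H \<subseteq> B" "E \<noteq> {}" "closed E" "closed H" "geod_convex E" "geod_convex H"
    "bounded E" "bounded H" "T ` E \<subseteq> H" "T ` H \<subseteq> E"
    "x \<in> E \<Longrightarrow> \<exists>y\<in>H. dist x y = D" "y \<in> H \<Longrightarrow> \<exists>x\<in>E. dist x y = D"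
  using assms unfolding invariant_proximal_pair_def by (auto simp: mem_proximal_part dist_commute)

lemma invariant_proximal_pair_Inter:
  assumes "\<C> \<noteq> {}" and pairs: "\<And>c. c \<in> \<C> \<Longrightarrow> invariant_proximal_pair (fst c) (snd c)"
    and chain: "\<And>c d. c \<in> \<C> \<Longrightarrow> d \<in> \<C> \<Longrightarrow> fst c \<subseteq> fst d \<and> snd c \<subseteq> snd d \<or> fst d \<subseteq> fst c \<and> snd d \<subseteq> snd c"
  shows "invariant_proximal_pair (\<Inter>(fst ` \<C>)) (\<Inter>(snd ` \<C>))"
proof -
  let ?E = "\<Inter>(fst ` \<C>)" and ?H = "\<Inter>(snd ` \<C>)"
  obtain c0 where c0: "c0 \<in> \<C>" using assms(1) by blast
  note pair = invariant_proximal_pairD[OF pairs]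
  \<comment> \<open>Partners are unique, so a point of \<open>?E\<close> has the same partner in every member of the chain.\<close>
  have E_partner: "\<exists>y\<in>?H. dist x y = D" if x: "x \<in> ?E" for x
  proof -
    have xA: "x \<in> A" using x c0 pair(1)[OF c0] by blast
    obtain y where y: "y \<in> snd c0" "dist x y = D" using pair(12)[OF c0] x c0 by blast
    have "y \<in> snd c" if c: "c \<in> \<C>" for c
    proof -
      obtain y' where y': "y' \<in> snd c" "dist x y' = D" using pair(12)[OF c] x c by blast
      then have "y' = y" using proximal_partner_unique[OF xA _ xA, of y' y] pair(2)[OF c] pair(2)[OF c0] y by blast
      then show ?thesis using y' by simp
    qed
    then show ?thesis using y by blast
  qed
  have H_partner: "\<exists>x\<in>?E. dist x y = D" if y: "y \<in> ?H" for y
  proof -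
    have yB: "y \<in> B" using y c0 pair(2)[OF c0] by blast
    obtain x where x: "x \<in> fst c0" "dist x y = D" using pair(13)[OF c0] y c0 by blast
    have "x \<in> fst c" if c: "c \<in> \<C>" for c
    proof -
      obtain x' where x': "x' \<in> fst c" "dist x' y = D" using pair(13)[OF c] y c by blast
      then have "x' = x" using proximal_partner_unique[OF _ yB _ yB, of x' x] pair(1)[OF c] pair(1)[OF c0] x by blast
      then show ?thesis using x' by simp
    qed
    then show ?thesis using x by blast
  qed
  have "?E \<noteq> {}"
  proof (rule chain_Inter_nonempty)
    show "fst ` \<C> \<noteq> {}" using assms(1) by blast
    show "K \<noteq> {} \<and> closed K \<and> geod_convex K \<and> bounded K" if "K \<in> fst ` \<C>" for K
      using that pair(3,4,6,8) by blast
    show "K \<subseteq> L \<or> L \<subseteq> K" if "K \<in> fst ` \<C>" "L \<in> fst ` \<C>" for K L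
      using that chain by blast
  qed
  then show ?thesis
    unfolding invariant_proximal_pair_def
  proof (intro conjI)
    show "?E \<subseteq> A" "?H \<subseteq> B" using c0 pair(1,2)[OF c0] by blast+
    show "?H \<noteq> {}" using \<open>?E \<noteq> {}\<close> E_partner by blast
    show "closed ?E" by (rule closed_Inter) (use pair(4) in blast)
    show "closed ?H" by (rule closed_Inter) (use pair(5) in blast)
    show "geod_convex ?E" by (rule geod_convex_Inter) (use pair(6) in blast)
    show "geod_convex ?H" by (rule geod_convex_Inter) (use pair(7) in blast)
    show "bounded ?E" by (rule bounded_subset[OF pair(8)[OF c0]]) (use c0 in blast)
    show "bounded ?H" by (rule bounded_subset[OF pair(9)[OF c0]]) (use c0 in blast)
    show "T ` ?E \<subseteq> ?H" using pair(10) by (fastforce simp: image_subset_iff)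
    show "T ` ?H \<subseteq> ?E" using pair(11) by (fastforce simp: image_subset_iff)
    show "?E \<subseteq> proximal_part ?E ?H D" using E_partner by (auto simp: mem_proximal_part)
    show "?H \<subseteq> proximal_part ?H ?E D" using H_partner by (auto simp: mem_proximal_part dist_commute)
  qed
qed


lemma minimal_invariant_pair_exists:
  obtains K1 K2 where "minimal_invariant_pair K1 K2"
proof -
  define \<Sigma> where "\<Sigma> = {c. invariant_proximal_pair (fst c) (snd c)}"
  define P where "P c d \<longleftrightarrow> fst d \<subseteq> fst c \<and> snd d \<subseteq> snd c" for c d :: "'a set \<times> 'a set"
  have "partial_order_on \<Sigma> (relation_of P \<Sigma>)"
    by (rule partial_order_on_relation_ofI) (auto simp: P_def prod_eq_iff)
  then have "\<exists>m\<in>\<Sigma>. \<forall>c\<in>\<Sigma>. P m c \<longrightarrow> c = m"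
  proof (rule predicate_Zorn)
    fix \<C> assume "\<C> \<in> Chains (relation_of P \<Sigma>)"
    then have C: "\<C> \<subseteq> \<Sigma>" "\<And>c d. c \<in> \<C> \<Longrightarrow> d \<in> \<C> \<Longrightarrow> P c d \<or> P d c"
      unfolding Chains_def relation_of_def by auto
    show "\<exists>u\<in>\<Sigma>. \<forall>c\<in>\<C>. P c u"
    proof (cases "\<C> = {}")
      case True
      then show ?thesis using invariant_proximal_pair_exists by (auto simp: \<Sigma>_def)
    next
      case False
      have "(\<Inter>(fst ` \<C>), \<Inter>(snd ` \<C>)) \<in> \<Sigma>"
        using invariant_proximal_pair_Inter[OF False] C unfolding \<Sigma>_def P_def by fastforce
      then show ?thesis unfolding P_def by (intro bexI[of _ "(\<Inter>(fst ` \<C>), \<Inter>(snd ` \<C>))"]) auto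
    qed
  qed
  then obtain m where "m \<in> \<Sigma>" "\<And>c. c \<in> \<Sigma> \<Longrightarrow> P m c \<Longrightarrow> c = m" by blast
  then have "minimal_invariant_pair (fst m) (snd m)"
    unfolding minimal_invariant_pair_def \<Sigma>_def P_def by fastforce
  then show ?thesis by (rule that)
qed

lemma minimal_invariant_pair_subset:
  assumes min: "minimal_invariant_pair K1 K2"
    and C: "closed C1" "closed C2" "geod_convex C1" "geod_convex C2"
    and "\<exists>x\<in>K1 \<inter> C1. \<exists>y\<in>K2 \<inter> C2. dist x y = D"
    and invariant: "\<And>x y. x \<in> K1 \<inter> C1 \<Longrightarrow> y \<in> K2 \<inter> C2 \<Longrightarrow> dist x y = D \<Longrightarrow> T x \<in> C2 \<and> T y \<in> C1"
  shows "K1 \<subseteq> C1 \<and> K2 \<subseteq> C2"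
proof -
  have K: "invariant_proximal_pair K1 K2" using min unfolding minimal_invariant_pair_def by blast
  note K = invariant_proximal_pairD[OF K]
  have "invariant_proximal_pair (proximal_part (K1 \<inter> C1) (K2 \<inter> C2) D) (proximal_part (K2 \<inter> C2) (K1 \<inter> C1) D)"
  proof (rule invariant_proximal_pair_proximal_parts)
    show "K1 \<inter> C1 \<subseteq> A" "K2 \<inter> C2 \<subseteq> B" using K(1,2) by blast+
    show "closed (K1 \<inter> C1)" "closed (K2 \<inter> C2)" using K(4,5) C(1,2) by blast+
    show "geod_convex (K1 \<inter> C1)" "geod_convex (K2 \<inter> C2)" using K(6,7) C(3,4) geod_convex_Int by blast+
    show "bounded (K2 \<inter> C2)" using K(9) by (rule bounded_subset) blast
    show "T x \<in> K2 \<inter> C2 \<and> T y \<in> K1 \<inter> C1"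
      if "x \<in> K1 \<inter> C1" "y \<in> K2 \<inter> C2" "dist x y = D" for x y
      using invariant[OF that] K(10,11) that by blast
  qed fact
  moreover have "proximal_part (K1 \<inter> C1) (K2 \<inter> C2) D \<subseteq> K1" "proximal_part (K2 \<inter> C2) (K1 \<inter> C1) D \<subseteq> K2"
    by (auto simp: mem_proximal_part)
  ultimately have "proximal_part (K1 \<inter> C1) (K2 \<inter> C2) D = K1" "proximal_part (K2 \<inter> C2) (K1 \<inter> C1) D = K2"
    using min unfolding minimal_invariant_pair_def by blast+
  then show ?thesis by (auto simp: mem_proximal_part)
qed

lemma minimal_invariant_pair_radius:
  assumes min: "minimal_invariant_pair K1 K2"
    and m: "m \<in> K1" "m' \<in> K2" "dist m m' = D"
    and radius: "\<And>v. v \<in> K2 \<Longrightarrow> dist v m \<le> r" "\<And>u. u \<in> K1 \<Longrightarrow> dist u m' \<le> r"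
    and "u \<in> K1" "v \<in> K2"
  shows "dist u v \<le> r"
proof -
  have K: "invariant_proximal_pair K1 K2" using min unfolding minimal_invariant_pair_def by blast
  note K = invariant_proximal_pairD[OF K]
  define C1 where "C1 = (\<Inter>v\<in>K2. cball v r)"
  define C2 where "C2 = (\<Inter>u\<in>K1. cball u r)"
  \<comment> \<open>\<open>C1\<close> and \<open>C2\<close> are not visibly invariant, but \<open>G1\<close> and \<open>G2\<close> are; minimality first
    puts \<open>K1\<close>, \<open>K2\<close> inside \<open>G1\<close>, \<open>G2\<close>, and this in turn makes \<open>C1\<close>, \<open>C2\<close> invariant.\<close>
  define G1 where "G1 = (\<Inter>u\<in>K1 \<inter> C1. cball (T u) r)"
  define G2 where "G2 = (\<Inter>v\<in>K2 \<inter> C2. cball (T v) r)"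
  have closed: "closed C1" "closed C2" "closed G1" "closed G2"
    unfolding C1_def C2_def G1_def G2_def by (auto intro!: closed_INT)
  have convex: "geod_convex C1" "geod_convex C2" "geod_convex G1" "geod_convex G2"
    unfolding C1_def C2_def G1_def G2_def by (auto intro!: geod_convex_Inter geod_convex_cball)
  have T_K2: "T y \<in> G1" if "y \<in> K2" for y
  proof -
    have "dist (T u) (T y) \<le> r" if u: "u \<in> K1 \<inter> C1" for u
    proof -
      have "dist (T u) (T y) \<le> dist u y" using u \<open>y \<in> K2\<close> K(1,2) by (intro dist_T_le) auto
      moreover have "dist y u \<le> r" using u \<open>y \<in> K2\<close> by (simp add: C1_def)
      ultimately show ?thesis by (simp add: dist_commute)
    qed
    then show ?thesis by (simp add: G1_def)
  qed
  have T_K1: "T x \<in> G2" if "x \<in> K1" for x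
  proof -
    have "dist (T v) (T x) \<le> r" if v: "v \<in> K2 \<inter> C2" for v
    proof -
      have "dist (T x) (T v) \<le> dist x v" using v \<open>x \<in> K1\<close> K(1,2) by (intro dist_T_le) auto
      moreover have "dist x v \<le> r" using v \<open>x \<in> K1\<close> by (simp add: C2_def)
      ultimately show ?thesis by (simp add: dist_commute)
    qed
    then show ?thesis by (simp add: G2_def)
  qed
  have "dist (T m') (T m) = D" using dist_T_eq_D[of m m'] m K(1,2) by (auto simp: dist_commute)
  then have "K1 \<subseteq> G1 \<and> K2 \<subseteq> G2"
    using minimal_invariant_pair_subset[OF min closed(3,4) convex(3,4)] m K(10,11) T_K1 T_K2 by blast
  then have "K1 \<subseteq> C1 \<and> K2 \<subseteq> C2"
  proof (intro minimal_invariant_pair_subset[OF min closed(1,2) convex(1,2)])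
    have "m \<in> C1" "m' \<in> C2" using radius by (auto simp: C1_def C2_def)
    then show "\<exists>x\<in>K1 \<inter> C1. \<exists>y\<in>K2 \<inter> C2. dist x y = D" using m by blast
    show "T x \<in> C2 \<and> T y \<in> C1"
      if G: "K1 \<subseteq> G1 \<and> K2 \<subseteq> G2" and xy: "x \<in> K1 \<inter> C1" "y \<in> K2 \<inter> C2" for x y
    proof -
      have "dist (T x) u \<le> r" if "u \<in> K1" for u using G that xy(1) by (auto simp: G1_def)
      moreover have "dist (T y) v \<le> r" if "v \<in> K2" for v using G that xy(2) by (auto simp: G2_def)
      ultimately show ?thesis by (simp add: C1_def C2_def dist_commute)
    qed
  qed
  then have "dist v u \<le> r" using \<open>u \<in> K1\<close> \<open>v \<in> K2\<close> by (auto simp: C1_def)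
  then show ?thesis by (simp add: dist_commute)
qed


lemma invariant_proximal_pair_midpoints:
  assumes K: "invariant_proximal_pair K1 K2"
    and "x \<in> K1" "x' \<in> K1" "y \<in> K2" "y' \<in> K2" "dist x y = D" "dist x' y' = D"
  obtains m m' where "m \<in> K1" "m' \<in> K2" "is_midpoint m x x'" "is_midpoint m' y y'" "dist m m' = D"
proof -
  note K = invariant_proximal_pairD[OF K]
  obtain c1 l1 c2 l2 where g: "geodesic_joining c1 l1 x x'" "geodesic_joining c2 l2 y y'"
    using geodesic_joining_exists by metis
  have "0 \<le> l1" "0 \<le> l2" using g unfolding geodesic_joining_def geodesic_def by auto
  then have m: "c1 (l1/2) \<in> K1" "c2 (l2/2) \<in> K2"
    using geod_convexD[OF K(6) assms(2,3) g(1)] geod_convexD[OF K(7) assms(4,5) g(2)] by auto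
  have "dist (c1 ((1/2) * l1)) (c2 ((1/2) * l2)) \<le> (1 - 1/2) * dist x y + (1/2) * dist x' y'"
    by (rule busemann_joining[OF g]) auto
  then have "dist (c1 (l1/2)) (c2 (l2/2)) \<le> D" using assms(6,7) by simp
  moreover have "D \<le> dist (c1 (l1/2)) (c2 (l2/2))" using m K(1,2) by (auto intro: setdist_le_dist)
  ultimately show ?thesis
    using that[OF m] geodesic_joining_midpoint[OF g(1)] geodesic_joining_midpoint[OF g(2)] by simp
qed

text \<open>If \<open>x \<in> K1\<close>, \<open>y \<in> K2\<close> were farther apart than \<open>D\<close>, the midpoints of \<open>x\<close> and the partner of \<open>y\<close>,
  and of \<open>y\<close> and the partner of \<open>x\<close>, would form a proximal pair lying strictly inside the
  diameter \<open>\<Delta>\<close> of \<open>(K1, K2)\<close> by uniform convexity, and minimality would shrink \<open>\<Delta>\<close>.\<close>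
lemma minimal_invariant_pair_dist_le:
  assumes min: "minimal_invariant_pair K1 K2" and "x \<in> K1" "y \<in> K2"
  shows "dist x y \<le> D"
proof (rule ccontr)
  assume far: "\<not> dist x y \<le> D"
  have K': "invariant_proximal_pair K1 K2" using min unfolding minimal_invariant_pair_def by blast
  note K = invariant_proximal_pairD[OF K']
  obtain M1 M2 where M: "\<forall>u\<in>K1. dist x u \<le> M1" "\<forall>v\<in>K2. dist x v \<le> M2"
    using K(8,9) bounded_any_center by metis
  define \<Delta> where "\<Delta> = (SUP p\<in>K1 \<times> K2. dist (fst p) (snd p))"
  have "dist (fst p) (snd p) \<le> M1 + M2" if "p \<in> K1 \<times> K2" for p
    using M that dist_triangle3[of "fst p" "snd p" x] by force
  then have bdd: "bdd_above ((\<lambda>p. dist (fst p) (snd p)) ` (K1 \<times> K2))" by (meson bdd_above.I2)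
  have le_\<Delta>: "dist u v \<le> \<Delta>" if "u \<in> K1" "v \<in> K2" for u v
    using cSUP_upper[OF _ bdd, of "(u, v)"] that by (simp add: \<Delta>_def)
  have "0 < \<Delta>" using le_\<Delta>[OF assms(2,3)] far setdist_pos_le[of A B] by linarith
  obtain x' where x': "x' \<in> K1" "dist x' y = D" using K(13)[OF assms(3)] by blast
  obtain y' where y': "y' \<in> K2" "dist x y' = D" using K(12)[OF assms(2)] by blast
  obtain m m' where m: "m \<in> K1" "m' \<in> K2" "is_midpoint m x x'" "is_midpoint m' y' y" "dist m m' = D"
    using invariant_proximal_pair_midpoints[OF K' assms(2) x'(1) y'(1) assms(3) y'(2) x'(2)] by blast
  define \<epsilon> where "\<epsilon> = min (dist x x') (dist y' y)"
  have "x \<noteq> x'" "y' \<noteq> y" using far x'(2) y'(2) by auto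
  then have "0 < \<epsilon>" by (simp add: \<epsilon>_def)
  obtain c \<eta> where "0 < c" "0 < \<eta>"
    and drop: "\<And>a x y m s. s \<le> \<Delta> + \<eta> \<Longrightarrow> dist x a \<le> s \<Longrightarrow> dist y a \<le> s \<Longrightarrow> \<epsilon> \<le> dist x y
      \<Longrightarrow> is_midpoint m x y \<Longrightarrow> dist m (a::'a) \<le> max s \<Delta> - c"
    using midpoint_drop[OF \<open>0 < \<Delta>\<close> \<open>0 < \<epsilon>\<close>] by blast
  have "dist v m \<le> \<Delta> - c" if "v \<in> K2" for v
    using drop[of \<Delta> x v x' m] le_\<Delta>[OF assms(2) that] le_\<Delta>[OF x'(1) that] m(3) \<open>0 < \<eta>\<close>
    by (simp add: \<epsilon>_def dist_commute)
  moreover have "dist u m' \<le> \<Delta> - c" if "u \<in> K1" for u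
    using drop[of \<Delta> y' u y m'] le_\<Delta>[OF that y'(1)] le_\<Delta>[OF that assms(3)] m(4) \<open>0 < \<eta>\<close>
    by (simp add: \<epsilon>_def dist_commute)
  ultimately have "dist u v \<le> \<Delta> - c" if "u \<in> K1" "v \<in> K2" for u v
    using minimal_invariant_pair_radius[OF min m(1,2,5)] that by blast
  moreover have "\<exists>p\<in>K1 \<times> K2. \<Delta> - c < dist (fst p) (snd p)"
    using less_cSUP_iff[OF _ bdd, of "\<Delta> - c"] assms(2,3) \<open>0 < c\<close> by (force simp: \<Delta>_def)
  ultimately show False by force
qed

end

theorem mainTheorem5:
  fixes A B :: "'a::complete_space set" and T :: "'a \<Rightarrow> 'a" and \<delta> :: "real \<Rightarrow> real \<Rightarrow> real"
  assumes "geodesic_space TYPE('a)"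
    and "busemann_convex TYPE('a)"
    and "modulus_uc TYPE('a) \<delta>"
    and "monotone_modulus \<delta> \<or> lsc_right_modulus \<delta>"
    and "A \<noteq> {}" and "B \<noteq> {}"
    and "closed A" and "closed B" and "geod_convex A" and "geod_convex B"
    and "bounded B"
    and "cyclic_map T A B"
    and "rel_nonexpansive T A B"
  shows "\<exists>x\<in>A. \<exists>y\<in>B. dist x (T x) = setdist A B \<and> dist y (T y) = setdist A B"
proof -
  interpret cyclic_relatively_nonexpansive "TYPE('a)" \<delta> A B T
    by unfold_locales (use assms in auto)
  obtain K1 K2 where min: "minimal_invariant_pair K1 K2" by (rule minimal_invariant_pair_exists)
  then have K: "invariant_proximal_pair K1 K2" unfolding minimal_invariant_pair_def by blast
  obtain x where "x \<in> K1" using invariant_proximal_pairD(3)[OF K] by blast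
  then have "x \<in> A" "T x \<in> K2" using invariant_proximal_pairD(1,10)[OF K] by blast+
  then have "T x \<in> B" and x: "dist x (T x) = D"
    using minimal_invariant_pair_dist_le[OF min \<open>x \<in> K1\<close>] setdist_le_dist[of x A "T x" B] T_A
    by (auto intro: antisym)
  then have "dist (T x) (T (T x)) = D" using dist_T_eq_D[OF \<open>x \<in> A\<close>] by blast
  then show ?thesis using \<open>x \<in> A\<close> \<open>T x \<in> B\<close> x by blast
qed

end
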